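(* For every $1\le w\le\infty$, the thresholded matrix $\hat\Sigma$ from step (2) of DP-Thresholding satisfies $$\mathbb{E}\|\hat\Sigma-\Sigma\|_w^2=O\Big(\frac{s^2\log p\,\log(1/\delta)}{n\epsilon^2}\Big),$$ with implied constant depending only on $\sigma^2$ (uniform in $w$).
   Context: For a $p\times p$ matrix $A$, $\|A\|_w=\sup_{x\neq0}\|Ax\|_w/\|x\|_w$ is the operator norm induced by the vector $\ell_w$ norm; in particular $\|A\|_1$ is the maximum absolute column sum and $\|A\|_\infty$ the maximum absolute row sum. Setting: $x_1,\dots,x_n$ are i.i.d. random vectors in $\mathbb{R}^p$ (high-dimensional regime $p\gg n\ge \mathrm{poly}(\log p)$) with $\mathbb{E}x_i=0$, $\|x_i\|_2\le 1$ almost surely, sub-Gaussian with parameter $\sigma^2$: $\mathbb{P}\{|v^Tx_i|>t\}\le e^{-t^2/(2\sigma^2)}$ for all $t>0$ and all unit vectors $v$. The covariance $\Sigma=(\sigma_{ij})$ lies in $\mathcal{G}_0(s)$: for each column $j$, the vector of off-diagonal entries $(\sigma_{ij})_{i\neq j}$ has at most $s$ nonzeros. $\Sigma^*=(\sigma^*_{ij})=\frac1n\sum_i x_ix_i^T$. The constant $\gamma>0$ (depending only on $\sigma^2$) is one for which there is a constant $C_1$ with $\mathbb{P}(|\sigma^*_{ij}-\sigma_{ij}|>t)\le C_1e^{-8nt^2/\gamma^2}$ for all $i,j$ and all sufficiently small $|t|$, in particular $\mathbb{P}(|\sigma^*_{ij}-\sigma_{ij}|>\gamma\sqrt{\log p/n})\le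 C_1p^{-8}$. DP-Thresholding, steps (1)-(2), with input $0<\epsilon,\delta\le1$: (1) $\tilde\Sigma=(\tilde\sigma_{ij})=\Sigma^*+N$, where $N$ is a symmetric $p\times p$ matrix whose upper-triangular entries (including the diagonal) are i.i.d. $\mathcal{N}(0,\sigma_1^2)$, independent of the data, with $\sigma_1^2=\frac{2\ln(1.25/\delta)}{n^2\epsilon^2}$, lower triangle copied from upper; (2) $\hat\sigma_{ij}=\tilde\sigma_{ij}\cdot\mathbb{I}[|\tilde\sigma_{ij}|>\tau]$ with $\tau=\gamma\sqrt{\frac{\log p}{n}}+\frac{4\sqrt{2\ln(1.25/\delta)}\sqrt{\log p}}{n\epsilon}$. *)

theory Defs
  imports "HOL-Probability.Probability"
begin

text \<open>Vectors in R^p are functions nat => real, only indices < p are relevant;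
  p x p matrices are functions nat => nat => real, only indices < p are relevant.\<close>

definition lw_norm :: "nat \<Rightarrow> ereal \<Rightarrow> (nat \<Rightarrow> real) \<Rightarrow> real" where
  "lw_norm p w x =
     (if w = \<infinity> then Max ((\<lambda>j. \<bar>x j\<bar>) ` {..<p})
      else (\<Sum>j<p. \<bar>x j\<bar> powr real_of_ereal w) powr (1 / real_of_ereal w))"

definition mat_vec :: "nat \<Rightarrow> (nat \<Rightarrow> nat \<Rightarrow> real) \<Rightarrow> (nat \<Rightarrow> real) \<Rightarrow> (nat \<Rightarrow> real)" where
  "mat_vec p A x = (\<lambda>i. \<Sum>j<p. A i j * x j)"

definition op_norm :: "nat \<Rightarrow> ereal \<Rightarrow> (nat \<Rightarrow> nat \<Rightarrow> real) \<Rightarrow> real" where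
  "op_norm p w A =
     (SUP x\<in>{x. (\<forall>j\<ge>p. x j = 0) \<and> (\<exists>j<p. x j \<noteq> 0)}.
        lw_norm p w (mat_vec p A x) / lw_norm p w x)"

text \<open>Population covariance of a (mean zero) distribution D on R^p.\<close>
definition cov :: "(nat \<Rightarrow> real) measure \<Rightarrow> nat \<Rightarrow> nat \<Rightarrow> real" where
  "cov D i j = (\<integral>x. x i * x j \<partial>D)"

definition sample_cov :: "nat \<Rightarrow> (nat \<Rightarrow> nat \<Rightarrow> real) \<Rightarrow> nat \<Rightarrow> nat \<Rightarrow> real" where
  "sample_cov n xs i j = (1 / real n) * (\<Sum>k<n. xs k i * xs k j)"

definition G0 :: "nat \<Rightarrow> nat \<Rightarrow> (nat \<Rightarrow> nat \<Rightarrow> real) \<Rightarrow> bool" where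
  "G0 p s S = (\<forall>j<p. card {i. i < p \<and> i \<noteq> j \<and> S i j \<noteq> 0} \<le> s)"

definition dp_sigma1 :: "nat \<Rightarrow> real \<Rightarrow> real \<Rightarrow> real" where
  "dp_sigma1 n \<epsilon> \<delta> = sqrt (2 * ln (1.25 / \<delta>)) / (real n * \<epsilon>)"

definition dp_tau :: "real \<Rightarrow> nat \<Rightarrow> nat \<Rightarrow> real \<Rightarrow> real \<Rightarrow> real" where
  "dp_tau \<gamma> p n \<epsilon> \<delta> =
     \<gamma> * sqrt (ln (real p) / real n)
     + 4 * sqrt (2 * ln (1.25 / \<delta>)) * sqrt (ln (real p)) / (real n * \<epsilon>)"

text \<open>Upper-triangular index set (including diagonal) for the independent noise entries.\<close>
definition upper_idx :: "nat \<Rightarrow> (nat \<times> nat) set" where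
  "upper_idx p = {(i, j). i \<le> j \<and> j < p}"

definition sym_noise :: "((nat \<times> nat) \<Rightarrow> real) \<Rightarrow> nat \<Rightarrow> nat \<Rightarrow> real" where
  "sym_noise z i j = z (min i j, max i j)"

definition noise_measure :: "nat \<Rightarrow> real \<Rightarrow> ((nat \<times> nat) \<Rightarrow> real) measure" where
  "noise_measure p \<sigma>1 = PiM (upper_idx p) (\<lambda>_. density lborel (normal_density 0 \<sigma>1))"

text \<open>Step (1)+(2): the thresholded estimator Sigma-hat from sample xs and noise z.\<close>
definition dp_threshold :: "nat \<Rightarrow> real \<Rightarrow> (nat \<Rightarrow> nat \<Rightarrow> real) \<Rightarrow> ((nat \<times> nat) \<Rightarrow> real)
    \<Rightarrow> nat \<Rightarrow> nat \<Rightarrow> real" where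
  "dp_threshold n \<tau> xs z i j =
     (let t = sample_cov n xs i j + sym_noise z i j in if \<bar>t\<bar> > \<tau> then t else 0)"

end

theory Submission
  imports Defs
begin

text \<open>The error E of the thresholded estimator is symmetric, so by Schur's test its
  l_w operator norm is at most its largest absolute row sum, uniformly in w. With all
  entries bounded by 1, thresholding at tau = a + b errs by at most 2 tau on the support
  of the covariance, which has at most s + 1 entries per row, and elsewhere only when the
  sampling deviation exceeds a or the Gaussian noise exceeds b. After squaring, the
  support contributes O(tau^2 s^2); the deviation events have probability C1 p^-8 and the
  noise tails are dominated by an exponential moment of size p^-6, which absorb the factor
  p^4 coming from summing over all entries. Finally tau^2 = O(log p log(1/delta) / (n eps^2)).\<close>

section \<open>Schur's test for l_w operator norms\<close>

lemma convex_on_powr_nonneg: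
  fixes q :: real
  assumes q: "q \<ge> 1"
  shows "convex_on {0..} (\<lambda>x::real. x powr q)"
proof (rule convex_onI)
  fix t x y :: real
  assume t: "0 < t" "t < 1" and xy: "x \<in> {0..}" "y \<in> {0..}"
  have tq: "t powr q \<le> t" "(1 - t) powr q \<le> 1 - t"
    using t q powr_mono'[of 1 q t] powr_mono'[of 1 q "1 - t"] by auto
  consider "x = 0" | "y = 0" | "x \<noteq> 0" "y \<noteq> 0" by blast
  then show "((1 - t) *\<^sub>R x + t *\<^sub>R y) powr q \<le> (1 - t) * x powr q + t * y powr q"
  proof cases
    case 1
    have "(t * y) powr q = t powr q * y powr q" using t xy by (simp add: powr_mult)
    also have "\<dots> \<le> t * y powr q" using tq by (intro mult_right_mono) auto
    finally show ?thesis using 1 by simp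
  next
    case 2
    have "((1 - t) * x) powr q = (1 - t) powr q * x powr q" using t xy by (simp add: powr_mult)
    also have "\<dots> \<le> (1 - t) * x powr q" using tq by (intro mult_right_mono) auto
    finally show ?thesis using 2 by simp
  next
    case 3
    then show ?thesis using xy t convex_onD[OF powr_convex[OF q], of t x y] by auto
  qed
qed simp

lemma powr_weighted_sum_le:
  fixes c y :: "'i \<Rightarrow> real" and q K :: real
  assumes "finite A" and q: "q \<ge> 1"
    and c: "\<And>j. j \<in> A \<Longrightarrow> c j \<ge> 0" and y: "\<And>j. j \<in> A \<Longrightarrow> y j \<ge> 0"
    and K: "sum c A \<le> K"
  shows "(\<Sum>j\<in>A. c j * y j) powr q \<le> K powr (q - 1) * (\<Sum>j\<in>A. c j * y j powr q)"
proof -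
  define r where "r = sum c A"
  have r0: "r \<ge> 0" unfolding r_def using c by (auto intro: sum_nonneg)
  show ?thesis
  proof (cases "r = 0")
    case True
    then have "\<forall>j\<in>A. c j = 0" unfolding r_def using c \<open>finite A\<close> by (simp add: sum_nonneg_eq_0_iff)
    then show ?thesis using c by (simp add: sum_nonneg)
  next
    case False
    then have rp: "r > 0" using r0 by simp
    then have "A \<noteq> {}" unfolding r_def by auto
    have jensen: "(\<Sum>j\<in>A. (c j / r) *\<^sub>R y j) powr q \<le> (\<Sum>j\<in>A. (c j / r) * y j powr q)"
      using c y rp
      by (intro convex_on_sum[OF \<open>finite A\<close> \<open>A \<noteq> {}\<close> convex_on_powr_nonneg[OF q]])
        (auto simp: r_def sum_divide_distrib[symmetric])
    have r_powr: "r powr q = r powr (q - 1) * r"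
      using powr_add[of r "q - 1" 1] rp by simp
    have "(\<Sum>j\<in>A. c j * y j) powr q = (r * (\<Sum>j\<in>A. (c j / r) *\<^sub>R y j)) powr q"
      using rp by (simp add: sum_distrib_left)
    also have "\<dots> = r powr q * (\<Sum>j\<in>A. (c j / r) *\<^sub>R y j) powr q"
      by (rule powr_mult)
    also have "\<dots> \<le> r powr q * (\<Sum>j\<in>A. (c j / r) * y j powr q)"
      using jensen by (intro mult_left_mono) auto
    also have "\<dots> = r powr (q - 1) * (\<Sum>j\<in>A. c j * y j powr q)"
      using rp by (simp add: r_powr sum_distrib_left sum_divide_distrib)
    also have "\<dots> \<le> K powr (q - 1) * (\<Sum>j\<in>A. c j * y j powr q)"
      using c q r0 K by (intro mult_right_mono powr_mono2) (auto simp: r_def intro!: sum_nonneg)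
    finally show ?thesis .
  qed
qed

lemma abs_mat_vec_le: "\<bar>mat_vec p A x i\<bar> \<le> (\<Sum>j<p. \<bar>A i j\<bar> * \<bar>x j\<bar>)"
  unfolding mat_vec_def by (rule order_trans[OF sum_abs]) (simp add: abs_mult)

lemma lw_norm_nonneg:
  assumes "p > 0"
  shows "0 \<le> lw_norm p w x"
proof (cases "w = \<infinity>")
  case True
  have "0 \<le> \<bar>x 0\<bar>" by simp
  also have "\<dots> \<le> Max ((\<lambda>j. \<bar>x j\<bar>) ` {..<p})" using assms by (intro Max_ge) auto
  finally show ?thesis unfolding lw_norm_def using True by simp
qed (simp add: lw_norm_def)

lemma lw_norm_pos:
  assumes w: "w \<ge> 1" and x: "j < p" "x j \<noteq> 0"
  shows "0 < lw_norm p w x"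
proof (cases w)
  case PInf
  have "0 < \<bar>x j\<bar>" using x by simp
  also have "\<dots> \<le> Max ((\<lambda>j. \<bar>x j\<bar>) ` {..<p})" using x by (intro Max_ge) auto
  finally show ?thesis unfolding lw_norm_def using PInf by simp
next
  case (real q)
  have "0 < \<bar>x j\<bar> powr q" using x by simp
  also have "\<dots> \<le> (\<Sum>j<p. \<bar>x j\<bar> powr q)" using x by (intro member_le_sum) auto
  finally show ?thesis unfolding lw_norm_def using real by simp
qed (use w in simp)

lemma max_abs_mat_vec_le:
  fixes A :: "nat \<Rightarrow> nat \<Rightarrow> real"
  assumes p: "p > 0" and rows: "\<And>i. i < p \<Longrightarrow> (\<Sum>j<p. \<bar>A i j\<bar>) \<le> K"
  shows "Max ((\<lambda>i. \<bar>mat_vec p A x i\<bar>) ` {..<p}) \<le> K * Max ((\<lambda>j. \<bar>x j\<bar>) ` {..<p})"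
proof -
  define M where "M = Max ((\<lambda>j. \<bar>x j\<bar>) ` {..<p})"
  have xM: "\<bar>x j\<bar> \<le> M" if "j < p" for j unfolding M_def using that by (intro Max_ge) auto
  have "\<bar>mat_vec p A x i\<bar> \<le> K * M" if i: "i < p" for i
  proof -
    have "\<bar>mat_vec p A x i\<bar> \<le> (\<Sum>j<p. \<bar>A i j\<bar> * M)"
      by (rule order_trans[OF abs_mat_vec_le]) (intro sum_mono mult_left_mono xM; simp)
    also have "\<dots> = (\<Sum>j<p. \<bar>A i j\<bar>) * M" by (simp add: sum_distrib_right)
    also have "\<dots> \<le> K * M"
      using rows[OF i] xM[OF p] by (intro mult_right_mono) auto
    finally show ?thesis .
  qed
  then show ?thesis unfolding M_def[symmetric] using p by (intro Max.boundedI) auto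
qed

text \<open>Jensen's inequality with the weights |A i j| of row i moves the power inside the
  row sum; summing over i then exposes the column sums.\<close>

lemma sum_abs_mat_vec_powr_le:
  fixes A :: "nat \<Rightarrow> nat \<Rightarrow> real" and q K :: real
  assumes q: "q \<ge> 1" and K: "K \<ge> 0"
    and rows: "\<And>i. i < p \<Longrightarrow> (\<Sum>j<p. \<bar>A i j\<bar>) \<le> K"
    and cols: "\<And>j. j < p \<Longrightarrow> (\<Sum>i<p. \<bar>A i j\<bar>) \<le> K"
  shows "(\<Sum>i<p. \<bar>mat_vec p A x i\<bar> powr q) \<le> K powr q * (\<Sum>j<p. \<bar>x j\<bar> powr q)"
proof -
  have row: "\<bar>mat_vec p A x i\<bar> powr q \<le> K powr (q - 1) * (\<Sum>j<p. \<bar>A i j\<bar> * \<bar>x j\<bar> powr q)"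
    if i: "i < p" for i
  proof -
    have "\<bar>mat_vec p A x i\<bar> powr q \<le> (\<Sum>j<p. \<bar>A i j\<bar> * \<bar>x j\<bar>) powr q"
      using q by (intro powr_mono2 abs_mat_vec_le) auto
    also have "\<dots> \<le> K powr (q - 1) * (\<Sum>j<p. \<bar>A i j\<bar> * \<bar>x j\<bar> powr q)"
      by (rule powr_weighted_sum_le[OF _ q _ _ rows[OF i]]) auto
    finally show ?thesis .
  qed
  have K_powr: "K powr (q - 1) * K = K powr q"
    using powr_add[of K "q - 1" 1] K by (cases "K = 0") auto
  have "(\<Sum>i<p. \<bar>mat_vec p A x i\<bar> powr q)
      \<le> (\<Sum>i<p. K powr (q - 1) * (\<Sum>j<p. \<bar>A i j\<bar> * \<bar>x j\<bar> powr q))"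
    by (intro sum_mono row) auto
  also have "\<dots> = K powr (q - 1) * (\<Sum>i<p. \<Sum>j<p. \<bar>A i j\<bar> * \<bar>x j\<bar> powr q)"
    by (simp add: sum_distrib_left)
  also have "\<dots> = K powr (q - 1) * (\<Sum>j<p. \<Sum>i<p. \<bar>A i j\<bar> * \<bar>x j\<bar> powr q)"
    by (subst sum.swap) (rule refl)
  also have "\<dots> = K powr (q - 1) * (\<Sum>j<p. (\<Sum>i<p. \<bar>A i j\<bar>) * \<bar>x j\<bar> powr q)"
    by (simp add: sum_distrib_right)
  also have "\<dots> \<le> K powr (q - 1) * (\<Sum>j<p. K * \<bar>x j\<bar> powr q)"
    by (intro mult_left_mono sum_mono mult_right_mono cols) auto
  also have "\<dots> = K powr q * (\<Sum>j<p. \<bar>x j\<bar> powr q)"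
    by (simp add: sum_distrib_left K_powr[symmetric] mult.assoc)
  finally show ?thesis .
qed

lemma lw_norm_mat_vec_le:
  fixes A :: "nat \<Rightarrow> nat \<Rightarrow> real"
  assumes p: "p > 0" and w: "w \<ge> 1"
    and rows: "\<And>i. i < p \<Longrightarrow> (\<Sum>j<p. \<bar>A i j\<bar>) \<le> K"
    and cols: "\<And>j. j < p \<Longrightarrow> (\<Sum>i<p. \<bar>A i j\<bar>) \<le> K"
  shows "lw_norm p w (mat_vec p A x) \<le> K * lw_norm p w x"
proof -
  have K: "K \<ge> 0" using rows[OF p] by (meson order_trans sum_nonneg abs_ge_zero)
  show ?thesis
  proof (cases w)
    case PInf
    then show ?thesis using max_abs_mat_vec_le[OF p rows] unfolding lw_norm_def by simp
  next
    case (real q)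
    then have q: "q \<ge> 1" using w by simp
    have "(\<Sum>i<p. \<bar>mat_vec p A x i\<bar> powr q) powr (1 / q)
        \<le> (K powr q * (\<Sum>j<p. \<bar>x j\<bar> powr q)) powr (1 / q)"
      using q sum_abs_mat_vec_powr_le[OF q K rows cols] by (intro powr_mono2) (auto intro!: sum_nonneg)
    also have "\<dots> = K * (\<Sum>j<p. \<bar>x j\<bar> powr q) powr (1 / q)"
      using K q by (simp add: powr_mult powr_powr sum_nonneg)
    finally show ?thesis using real q unfolding lw_norm_def by simp
  qed (use w in simp)
qed

lemma op_norm_schur_test:
  fixes A :: "nat \<Rightarrow> nat \<Rightarrow> real"
  assumes p: "p > 0" and w: "w \<ge> 1"
    and rows: "\<And>i. i < p \<Longrightarrow> (\<Sum>j<p. \<bar>A i j\<bar>) \<le> K"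
    and cols: "\<And>j. j < p \<Longrightarrow> (\<Sum>i<p. \<bar>A i j\<bar>) \<le> K"
  shows "0 \<le> op_norm p w A" and "op_norm p w A \<le> K"
proof -
  define X where "X = {x::nat\<Rightarrow>real. (\<forall>j\<ge>p. x j = 0) \<and> (\<exists>j<p. x j \<noteq> 0)}"
  define f where "f = (\<lambda>x. lw_norm p w (mat_vec p A x) / lw_norm p w x)"
  have f: "0 \<le> f x \<and> f x \<le> K" if x: "x \<in> X" for x
  proof -
    obtain j where "j < p" "x j \<noteq> 0" using x unfolding X_def by auto
    then have "0 < lw_norm p w x" by (rule lw_norm_pos[OF w])
    then show ?thesis
      using lw_norm_mat_vec_le[OF p w rows cols] lw_norm_nonneg[OF p]
      unfolding f_def by (simp add: divide_le_eq)
  qed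
  define e where "e = (\<lambda>j::nat. if j = 0 then 1 else (0::real))"
  have e: "e \<in> X" unfolding X_def e_def using p by auto
  have op_norm: "op_norm p w A = (SUP x\<in>X. f x)" unfolding op_norm_def X_def f_def ..
  show "0 \<le> op_norm p w A" unfolding op_norm
    using f e by (intro cSUP_upper2[OF _ e]) (auto intro!: bdd_aboveI2)
  show "op_norm p w A \<le> K" unfolding op_norm
    using f e by (intro cSUP_least) auto
qed

section \<open>Entrywise error of thresholding\<close>

lemma abs_threshold_error_le:
  fixes s0 \<sigma> z a b :: real
  assumes "a \<ge> 0" "b \<ge> 0" "\<bar>\<sigma>\<bar> \<le> 1" "\<bar>s0\<bar> \<le> 1"
  shows "\<bar>(if \<bar>s0 + z\<bar> > a + b then s0 + z else 0) - \<sigma>\<bar>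
    \<le> (if \<sigma> \<noteq> 0 then 2 * (a + b) else 0)
      + ((if \<bar>s0 - \<sigma>\<bar> > a then 3 + (a + b) else 0) + (if \<bar>z\<bar> > b then 3 + \<bar>z\<bar> else 0))"
  using assms by (auto split: if_splits simp: abs_if)

lemma card_row_support_le:
  assumes "G0 p s S" and sym: "\<And>i j. S i j = S j i" and "i < p"
  shows "card {j\<in>{..<p}. S i j \<noteq> 0} \<le> s + 1"
proof -
  have "{j\<in>{..<p}. S i j \<noteq> 0} \<subseteq> insert i {j. j < p \<and> j \<noteq> i \<and> S j i \<noteq> 0}"
    using sym by auto
  then have "card {j\<in>{..<p}. S i j \<noteq> 0} \<le> card (insert i {j. j < p \<and> j \<noteq> i \<and> S j i \<noteq> 0})"
    by (intro card_mono) auto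
  also have "\<dots> \<le> card {j. j < p \<and> j \<noteq> i \<and> S j i \<noteq> 0} + 1"
    by (simp add: card_insert_if)
  also have "card {j. j < p \<and> j \<noteq> i \<and> S j i \<noteq> 0} \<le> s"
    using assms unfolding G0_def by auto
  finally show ?thesis by simp
qed

lemma threshold_row_sum_le:
  fixes S0 S Z :: "nat \<Rightarrow> nat \<Rightarrow> real" and a b :: real
  assumes ab: "a \<ge> 0" "b \<ge> 0"
    and bounded: "\<And>i j. i < p \<Longrightarrow> j < p \<Longrightarrow> \<bar>S i j\<bar> \<le> 1 \<and> \<bar>S0 i j\<bar> \<le> 1"
    and G: "G0 p s S" and sym: "\<And>i j. S i j = S j i" and i: "i < p"
  shows "(\<Sum>j<p. \<bar>(if \<bar>S0 i j + Z i j\<bar> > a + b then S0 i j + Z i j else 0) - S i j\<bar>)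
    \<le> 2 * (a + b) * (real s + 1) + (\<Sum>j<p. (if \<bar>S0 i j - S i j\<bar> > a then 3 + (a + b) else 0)
      + (if \<bar>Z i j\<bar> > b then 3 + \<bar>Z i j\<bar> else 0))"
proof -
  have "(\<Sum>j<p. \<bar>(if \<bar>S0 i j + Z i j\<bar> > a + b then S0 i j + Z i j else 0) - S i j\<bar>)
     \<le> (\<Sum>j<p. (if S i j \<noteq> 0 then 2 * (a + b) else 0))
      + (\<Sum>j<p. (if \<bar>S0 i j - S i j\<bar> > a then 3 + (a + b) else 0)
      + (if \<bar>Z i j\<bar> > b then 3 + \<bar>Z i j\<bar> else 0))"
    unfolding sum.distrib[symmetric] using bounded i by (intro sum_mono abs_threshold_error_le[OF ab]) auto
  also have "(\<Sum>j<p. (if S i j \<noteq> 0 then 2 * (a + b) else 0))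
      = real (card {j\<in>{..<p}. S i j \<noteq> 0}) * (2 * (a + b))"
    by (simp add: sum.inter_filter[symmetric])
  also have "\<dots> \<le> (real s + 1) * (2 * (a + b))"
    using card_row_support_le[OF G sym i] ab by (intro mult_right_mono) auto
  finally show ?thesis by (simp add: algebra_simps)
qed

lemma square_sum_le_card_sum_squares:
  fixes X :: "nat \<Rightarrow> nat \<Rightarrow> real"
  shows "(\<Sum>i<p. \<Sum>j<p. X i j)\<^sup>2 \<le> (real p)\<^sup>2 * (\<Sum>i<p. \<Sum>j<p. (X i j)\<^sup>2)"
proof -
  have "(\<Sum>i<p. \<Sum>j<p. X i j)\<^sup>2 = (\<Sum>ij\<in>{..<p} \<times> {..<p}. case_prod X ij)\<^sup>2"
    by (simp add: sum.cartesian_product)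
  also have "\<dots> \<le> (\<Sum>ij\<in>{..<p} \<times> {..<p}. (case_prod X ij)\<^sup>2) * card ({..<p} \<times> {..<p})"
    by (rule sum_squared_le_sum_of_squares)
  also have "\<dots> = (real p)\<^sup>2 * (\<Sum>i<p. \<Sum>j<p. (X i j)\<^sup>2)"
    by (simp add: sum.cartesian_product case_prod_unfold power2_eq_square)
  finally show ?thesis .
qed

text \<open>The exponent 3/8 keeps the right-hand side integrable against N(0, sigma^2),
  while the factor exp (-3 b^2 / (8 sigma^2)) becomes p^-6 for the threshold
  b = 4 sigma sqrt (ln p).\<close>

lemma noise_tail_sq_le:
  fixes z b \<sigma> :: real
  assumes "b \<ge> 0"
  shows "2 * (if \<bar>z\<bar> > b then 3 + \<bar>z\<bar> else 0)\<^sup>2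
    \<le> exp (- 3 * b\<^sup>2 / (8 * \<sigma>\<^sup>2)) * ((36 + 4 * z\<^sup>2) * exp (3 * z\<^sup>2 / (8 * \<sigma>\<^sup>2)))"
proof (cases "\<bar>z\<bar> > b")
  case True
  have "b\<^sup>2 \<le> z\<^sup>2" using True assms power_mono[of b "\<bar>z\<bar>" 2] by simp
  then have "0 \<le> 3 * (z\<^sup>2 - b\<^sup>2) / (8 * \<sigma>\<^sup>2)" by simp
  then have "1 \<le> exp (- 3 * b\<^sup>2 / (8 * \<sigma>\<^sup>2)) * exp (3 * z\<^sup>2 / (8 * \<sigma>\<^sup>2))"
    by (simp add: exp_add[symmetric] diff_divide_distrib right_diff_distrib)
  moreover have "2 * (3 + \<bar>z\<bar>)\<^sup>2 \<le> 36 + 4 * z\<^sup>2"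
    using zero_le_square[of "3 - \<bar>z\<bar>"] by (simp add: power2_eq_square algebra_simps)
  ultimately have "2 * (3 + \<bar>z\<bar>)\<^sup>2 \<le> (36 + 4 * z\<^sup>2) * (exp (- 3 * b\<^sup>2 / (8 * \<sigma>\<^sup>2)) * exp (3 * z\<^sup>2 / (8 * \<sigma>\<^sup>2)))"
    using mult_mono[of "2 * (3 + \<bar>z\<bar>)\<^sup>2" "36 + 4 * z\<^sup>2" 1] by simp
  then show ?thesis using True by (simp only: mult_ac if_True)
qed simp

lemma op_norm_threshold_error_le:
  fixes S0 S Z :: "nat \<Rightarrow> nat \<Rightarrow> real" and a b :: real
  assumes p: "p > 0" and w: "w \<ge> 1" and ab: "a \<ge> 0" "b \<ge> 0"
    and bounded: "\<And>i j. i < p \<Longrightarrow> j < p \<Longrightarrow> \<bar>S i j\<bar> \<le> 1 \<and> \<bar>S0 i j\<bar> \<le> 1"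
    and sym: "\<And>i j. S i j = S j i" "\<And>i j. S0 i j = S0 j i" "\<And>i j. Z i j = Z j i"
    and G: "G0 p s S"
  defines "E \<equiv> \<lambda>i j. (if \<bar>S0 i j + Z i j\<bar> > a + b then S0 i j + Z i j else 0) - S i j"
  shows "0 \<le> op_norm p w E"
    and "op_norm p w E \<le> 2 * (a + b) * (real s + 1)
      + (\<Sum>i<p. \<Sum>j<p. (if \<bar>S0 i j - S i j\<bar> > a then 3 + (a + b) else 0)
        + (if \<bar>Z i j\<bar> > b then 3 + \<bar>Z i j\<bar> else 0))" (is "_ \<le> ?K")
proof -
  define X where "X i j = (if \<bar>S0 i j - S i j\<bar> > a then 3 + (a + b) else 0)
    + (if \<bar>Z i j\<bar> > b then 3 + \<bar>Z i j\<bar> else 0)" for i j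
  have rows: "(\<Sum>j<p. \<bar>E i j\<bar>) \<le> ?K" if i: "i < p" for i
  proof -
    have "(\<Sum>j<p. \<bar>E i j\<bar>) \<le> 2 * (a + b) * (real s + 1) + (\<Sum>j<p. X i j)"
      unfolding E_def X_def by (rule threshold_row_sum_le[OF ab bounded G sym(1) i])
    also have "\<dots> \<le> 2 * (a + b) * (real s + 1) + (\<Sum>i<p. \<Sum>j<p. X i j)"
      using i ab by (intro add_left_mono member_le_sum[where f="\<lambda>i. \<Sum>j<p. X i j"] sum_nonneg)
        (auto simp: X_def)
    finally show ?thesis unfolding X_def .
  qed
  have "E i j = E j i" for i j unfolding E_def using sym by simp
  then have cols: "(\<Sum>i<p. \<bar>E i j\<bar>) \<le> ?K" if "j < p" for j
    using rows[OF that] by simp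
  show "0 \<le> op_norm p w E" "op_norm p w E \<le> ?K"
    using op_norm_schur_test[OF p w rows cols] by auto
qed

lemma op_norm_threshold_error_sq_le:
  fixes S0 S Z :: "nat \<Rightarrow> nat \<Rightarrow> real" and a b \<sigma> :: real
  assumes p: "p > 0" and w: "w \<ge> 1" and ab: "a \<ge> 0" "b \<ge> 0"
    and bounded: "\<And>i j. i < p \<Longrightarrow> j < p \<Longrightarrow> \<bar>S i j\<bar> \<le> 1 \<and> \<bar>S0 i j\<bar> \<le> 1"
    and sym: "\<And>i j. S i j = S j i" "\<And>i j. S0 i j = S0 j i" "\<And>i j. Z i j = Z j i"
    and G: "G0 p s S"
  shows "(op_norm p w (\<lambda>i j. (if \<bar>S0 i j + Z i j\<bar> > a + b then S0 i j + Z i j else 0) - S i j))\<^sup>2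
    \<le> 8 * (a + b)\<^sup>2 * (real s + 1)\<^sup>2
      + (\<Sum>i<p. \<Sum>j<p. 4 * (real p)\<^sup>2 * (3 + (a + b))\<^sup>2 * of_bool (\<bar>S0 i j - S i j\<bar> > a)
        + 2 * (real p)\<^sup>2 * (exp (- 3 * b\<^sup>2 / (8 * \<sigma>\<^sup>2))
          * ((36 + 4 * (Z i j)\<^sup>2) * exp (3 * (Z i j)\<^sup>2 / (8 * \<sigma>\<^sup>2)))))"
  (is "(op_norm p w ?E)\<^sup>2 \<le> ?rhs")
proof -
  let ?T = "\<lambda>i j. 2 * (3 + (a + b))\<^sup>2 * of_bool (\<bar>S0 i j - S i j\<bar> > a)
    + exp (- 3 * b\<^sup>2 / (8 * \<sigma>\<^sup>2)) * ((36 + 4 * (Z i j)\<^sup>2) * exp (3 * (Z i j)\<^sup>2 / (8 * \<sigma>\<^sup>2)))"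
  define u where "u i j = (if \<bar>S0 i j - S i j\<bar> > a then 3 + (a + b) else 0)" for i j
  define v where "v i j = (if \<bar>Z i j\<bar> > b then 3 + \<bar>Z i j\<bar> else 0)" for i j
  define c where "c = 2 * (a + b) * (real s + 1)"
  have "(op_norm p w ?E)\<^sup>2 \<le> (c + (\<Sum>i<p. \<Sum>j<p. u i j + v i j))\<^sup>2"
    using op_norm_threshold_error_le[OF p w ab bounded sym G]
    unfolding u_def v_def c_def by (intro power_mono) auto
  also have "\<dots> \<le> 2 * c\<^sup>2 + 2 * (\<Sum>i<p. \<Sum>j<p. u i j + v i j)\<^sup>2"
    using zero_le_square[of "c - (\<Sum>i<p. \<Sum>j<p. u i j + v i j)"]
    by (simp add: power2_eq_square algebra_simps)
  also have "\<dots> \<le> 2 * c\<^sup>2 + 2 * ((real p)\<^sup>2 * (\<Sum>i<p. \<Sum>j<p. (u i j + v i j)\<^sup>2))"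
    using square_sum_le_card_sum_squares[of "\<lambda>i j. u i j + v i j" p] by simp
  also have "\<dots> \<le> 2 * c\<^sup>2 + 2 * ((real p)\<^sup>2 * (\<Sum>i<p. \<Sum>j<p. ?T i j))"
  proof -
    have "(u i j + v i j)\<^sup>2 \<le> 2 * (u i j)\<^sup>2 + 2 * (v i j)\<^sup>2" for i j
      using zero_le_square[of "u i j - v i j"] by (simp add: power2_eq_square algebra_simps)
    also have "2 * (u i j)\<^sup>2 + 2 * (v i j)\<^sup>2 \<le> ?T i j" for i j
      unfolding v_def using noise_tail_sq_le[OF ab(2)] by (intro add_mono) (auto simp: u_def)
    finally show ?thesis by (intro add_left_mono mult_left_mono sum_mono) auto
  qed
  also have "\<dots> = ?rhs"
    by (simp add: c_def sum_distrib_left algebra_simps power2_eq_square)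
  finally show ?thesis .
qed

section \<open>Gaussian exponential moments\<close>

lemma normal_density_mult_exp:
  fixes \<sigma> x :: real
  assumes "\<sigma> > 0"
  shows "normal_density 0 \<sigma> x * exp (3 * x\<^sup>2 / (8 * \<sigma>\<^sup>2)) = 2 * normal_density 0 (2 * \<sigma>) x"
proof -
  have sqrt: "sqrt (2 * pi * (2 * \<sigma>)\<^sup>2) = 2 * sqrt (2 * pi * \<sigma>\<^sup>2)"
    using real_sqrt_mult[of "2\<^sup>2" "2 * pi * \<sigma>\<^sup>2"] by (simp add: power2_eq_square ac_simps)
  have "- x\<^sup>2 / (2 * \<sigma>\<^sup>2) + 3 * x\<^sup>2 / (8 * \<sigma>\<^sup>2) = - x\<^sup>2 / (2 * (2 * \<sigma>)\<^sup>2)"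
    using assms by (simp add: field_simps power2_eq_square)
  then have "exp (- x\<^sup>2 / (2 * \<sigma>\<^sup>2)) * exp (3 * x\<^sup>2 / (8 * \<sigma>\<^sup>2)) = exp (- x\<^sup>2 / (2 * (2 * \<sigma>)\<^sup>2))"
    by (simp add: exp_add[symmetric])
  then show ?thesis
    using assms unfolding normal_density_def sqrt by (simp add: field_simps)
qed

lemma nn_integral_normal_exp_moment:
  fixes \<sigma> \<alpha> \<beta> :: real
  assumes \<sigma>: "\<sigma> > 0" and "\<alpha> \<ge> 0" "\<beta> \<ge> 0"
  shows "(\<integral>\<^sup>+x. ennreal ((\<alpha> + \<beta> * x\<^sup>2) * exp (3 * x\<^sup>2 / (8 * \<sigma>\<^sup>2)))
      \<partial>density lborel (normal_density 0 \<sigma>)) = ennreal (2 * (\<alpha> + 4 * \<beta> * \<sigma>\<^sup>2))"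
proof -
  let ?N = "normal_density 0 (2 * \<sigma>)"
  have \<sigma>2: "2 * \<sigma> > 0" using \<sigma> by simp
  have second_moment: "has_bochner_integral lborel (\<lambda>x. ?N x * (x - 0) ^ (2 * 1)) (4 * \<sigma>\<^sup>2)"
    using normal_moment_even[OF \<sigma>2, of 0 1] \<sigma> by (simp add: power2_eq_square)
  have moments: "has_bochner_integral lborel (\<lambda>x. 2 * (\<alpha> * ?N x + \<beta> * (?N x * (x - 0) ^ (2 * 1))))
      (2 * (\<alpha> * 1 + \<beta> * (4 * \<sigma>\<^sup>2)))"
    using \<sigma>2 second_moment
    by (intro has_bochner_integral_mult_right has_bochner_integral_add)
      (auto simp: has_bochner_integral_iff)
  have integral: "has_bochner_integral lborel
      (\<lambda>x. normal_density 0 \<sigma> x * ((\<alpha> + \<beta> * x\<^sup>2) * exp (3 * x\<^sup>2 / (8 * \<sigma>\<^sup>2))))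
      (2 * (\<alpha> + 4 * \<beta> * \<sigma>\<^sup>2))"
  proof -
    have "normal_density 0 \<sigma> x * ((\<alpha> + \<beta> * x\<^sup>2) * exp (3 * x\<^sup>2 / (8 * \<sigma>\<^sup>2)))
        = 2 * (\<alpha> * ?N x + \<beta> * (?N x * (x - 0) ^ (2 * 1)))" for x
      using normal_density_mult_exp[OF \<sigma>, of x] by (simp add: algebra_simps power2_eq_square)
    then show ?thesis using moments by simp
  qed
  have "(\<integral>\<^sup>+x. ennreal ((\<alpha> + \<beta> * x\<^sup>2) * exp (3 * x\<^sup>2 / (8 * \<sigma>\<^sup>2)))
      \<partial>density lborel (normal_density 0 \<sigma>))
    = (\<integral>\<^sup>+x. ennreal (normal_density 0 \<sigma> x * ((\<alpha> + \<beta> * x\<^sup>2) * exp (3 * x\<^sup>2 / (8 * \<sigma>\<^sup>2)))) \<partial>lborel)"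
    using assms by (subst nn_integral_density)
      (auto intro!: nn_integral_cong simp: ennreal_mult[symmetric])
  also have "\<dots> = ennreal (2 * (\<alpha> + 4 * \<beta> * \<sigma>\<^sup>2))"
    using integral assms
    by (subst nn_integral_eq_integral)
      (auto simp: has_bochner_integral_integral_eq integrable.intros)
  finally show ?thesis .
qed

lemma nn_integral_pair_fst:
  assumes "prob_space M2" and f: "f \<in> borel_measurable M1"
  shows "(\<integral>\<^sup>+\<omega>. f (fst \<omega>) \<partial>(M1 \<Otimes>\<^sub>M M2)) = (\<integral>\<^sup>+x. f x \<partial>M1)"
proof -
  have distr: "distr (M1 \<Otimes>\<^sub>M M2) M1 fst = M1"
    by (rule prob_space.distr_pair_fst[OF assms(1)])
  show ?thesis
    using nn_integral_distr[of fst "M1 \<Otimes>\<^sub>M M2" M1 f] f by (simp add: distr)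
qed

lemma nn_integral_pair_snd:
  assumes "prob_space M1" "prob_space M2" and f: "f \<in> borel_measurable M2"
  shows "(\<integral>\<^sup>+\<omega>. f (snd \<omega>) \<partial>(M1 \<Otimes>\<^sub>M M2)) = (\<integral>\<^sup>+y. f y \<partial>M2)"
proof -
  interpret pair_sigma_finite M1 M2
    using assms by (simp add: pair_sigma_finite_def prob_space_imp_sigma_finite)
  have "(\<integral>\<^sup>+\<omega>. f (snd \<omega>) \<partial>(M1 \<Otimes>\<^sub>M M2)) = (\<integral>\<^sup>+y. \<integral>\<^sup>+x. f y \<partial>M1 \<partial>M2)"
    using nn_integral_snd[of "\<lambda>\<omega>. f (snd \<omega>)"] f by simp
  also have "\<dots> = (\<integral>\<^sup>+y. f y \<partial>M2)"
    using prob_space.emeasure_space_1[OF assms(1)] by simp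
  finally show ?thesis .
qed

lemma nn_integral_PiM_component:
  assumes "prob_space N" "k \<in> I" and g: "g \<in> borel_measurable N"
  shows "(\<integral>\<^sup>+z. g (z k) \<partial>PiM I (\<lambda>_. N)) = (\<integral>\<^sup>+x. g x \<partial>N)"
proof -
  have distr: "distr (PiM I (\<lambda>_. N)) N (\<lambda>z. z k) = N"
    using assms by (intro distr_PiM_component) auto
  show ?thesis
    using nn_integral_distr[of "\<lambda>z. z k" "PiM I (\<lambda>_. N)" N g] g assms(2) by (simp add: distr)
qed

lemma nn_integral_pair_le_double_sum:
  fixes f :: "'a \<times> 'b \<Rightarrow> ennreal"
    and g :: "nat \<Rightarrow> nat \<Rightarrow> 'a \<Rightarrow> ennreal" and h :: "nat \<Rightarrow> nat \<Rightarrow> 'b \<Rightarrow> ennreal"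
  assumes M1: "prob_space M1" and M2: "prob_space M2"
    and dom: "AE \<omega> in M1 \<Otimes>\<^sub>M M2. f \<omega> \<le> c + (\<Sum>i<p. \<Sum>j<p. g i j (fst \<omega>) + h i j (snd \<omega>))"
    and g: "\<And>i j. i < p \<Longrightarrow> j < p \<Longrightarrow> g i j \<in> borel_measurable M1"
    and h: "\<And>i j. i < p \<Longrightarrow> j < p \<Longrightarrow> h i j \<in> borel_measurable M2"
    and Eg: "\<And>i j. i < p \<Longrightarrow> j < p \<Longrightarrow> (\<integral>\<^sup>+x. g i j x \<partial>M1) \<le> A"
    and Eh: "\<And>i j. i < p \<Longrightarrow> j < p \<Longrightarrow> (\<integral>\<^sup>+y. h i j y \<partial>M2) \<le> B"
  shows "(\<integral>\<^sup>+\<omega>. f \<omega> \<partial>(M1 \<Otimes>\<^sub>M M2)) \<le> c + of_nat p * (of_nat p * (A + B))"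
proof -
  interpret pair_prob_space M1 M2
    using M1 M2 by (simp add: pair_prob_space_def pair_sigma_finite_def prob_space_imp_sigma_finite)
  have G: "(\<lambda>\<omega>. g i j (fst \<omega>) + h i j (snd \<omega>)) \<in> borel_measurable (M1 \<Otimes>\<^sub>M M2)"
    if "i < p" "j < p" for i j
    using g[OF that] h[OF that] by measurable
  have integral_G: "(\<integral>\<^sup>+\<omega>. g i j (fst \<omega>) + h i j (snd \<omega>) \<partial>(M1 \<Otimes>\<^sub>M M2))
      = (\<integral>\<^sup>+\<omega>. g i j (fst \<omega>) \<partial>(M1 \<Otimes>\<^sub>M M2)) + (\<integral>\<^sup>+\<omega>. h i j (snd \<omega>) \<partial>(M1 \<Otimes>\<^sub>M M2))"
    if "i < p" "j < p" for i j
    using that by (intro nn_integral_add measurable_compose[OF measurable_fst g] measurable_compose[OF measurable_snd h])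
  have integral_sum: "(\<integral>\<^sup>+\<omega>. (\<Sum>i<p. \<Sum>j<p. g i j (fst \<omega>) + h i j (snd \<omega>)) \<partial>(M1 \<Otimes>\<^sub>M M2))
      = (\<Sum>i<p. \<Sum>j<p. \<integral>\<^sup>+\<omega>. g i j (fst \<omega>) + h i j (snd \<omega>) \<partial>(M1 \<Otimes>\<^sub>M M2))"
    using G by (subst nn_integral_sum) (auto intro!: borel_measurable_sum sum.cong nn_integral_sum)
  have "(\<integral>\<^sup>+\<omega>. f \<omega> \<partial>(M1 \<Otimes>\<^sub>M M2))
      \<le> (\<integral>\<^sup>+\<omega>. c + (\<Sum>i<p. \<Sum>j<p. g i j (fst \<omega>) + h i j (snd \<omega>)) \<partial>(M1 \<Otimes>\<^sub>M M2))"
    by (rule nn_integral_mono_AE[OF dom])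
  also have "\<dots> = c + (\<Sum>i<p. \<Sum>j<p. \<integral>\<^sup>+\<omega>. g i j (fst \<omega>) + h i j (snd \<omega>) \<partial>(M1 \<Otimes>\<^sub>M M2))"
    using G emeasure_space_1 unfolding integral_sum[symmetric]
    by (subst nn_integral_add) (auto intro!: borel_measurable_sum)
  also have "\<dots> = c + (\<Sum>i<p. \<Sum>j<p. (\<integral>\<^sup>+\<omega>. g i j (fst \<omega>) \<partial>(M1 \<Otimes>\<^sub>M M2))
      + (\<integral>\<^sup>+\<omega>. h i j (snd \<omega>) \<partial>(M1 \<Otimes>\<^sub>M M2)))"
    by (intro arg_cong[where f="(+) c"] sum.cong refl integral_G) auto
  also have "\<dots> = c + (\<Sum>i<p. \<Sum>j<p. (\<integral>\<^sup>+x. g i j x \<partial>M1) + (\<integral>\<^sup>+y. h i j y \<partial>M2))"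
    using g h by (simp add: nn_integral_pair_fst[OF M2] nn_integral_pair_snd[OF M1 M2])
  also have "\<dots> \<le> c + (\<Sum>i<p. \<Sum>j<p. A + B)"
    using Eg Eh by (intro add_left_mono sum_mono add_mono) auto
  finally show ?thesis by simp
qed

lemma AE_pair_fst:
  assumes "prob_space M2" and "AE x in M1. P x"
  shows "AE \<omega> in M1 \<Otimes>\<^sub>M M2. P (fst \<omega>)"
  using assms by (intro AE_distrD[OF measurable_fst]) (subst prob_space.distr_pair_fst)

lemma AE_PiM_all_components:
  fixes n :: nat
  assumes "prob_space D" and "AE x in D. P x"
  shows "AE xs in PiM {..<n} (\<lambda>_. D). \<forall>k\<in>{..<n}. P (xs k)"
  using assms by (intro AE_finite_allI) (auto intro!: AE_PiM_component)

lemma nn_integral_cmult_indicator_le: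
  assumes "prob_space M" "B \<in> sets M" "c \<ge> 0" and "measure M B \<le> q"
  shows "(\<integral>\<^sup>+x. ennreal (c * indicator B x) \<partial>M) \<le> ennreal (c * q)"
proof -
  interpret prob_space M by fact
  have "q \<ge> 0" using assms(4) measure_nonneg order_trans by blast
  have "ennreal c * emeasure M B \<le> ennreal c * ennreal q"
    using assms by (intro mult_left_mono) (auto simp: emeasure_eq_measure ennreal_leI)
  then show ?thesis
    using assms \<open>q \<ge> 0\<close> by (simp add: ennreal_mult' ennreal_indicator nn_integral_cmult_indicator)
qed

lemma abs_le_1_of_sum_squares_le_1:
  fixes x :: "nat \<Rightarrow> real"
  assumes "(\<Sum>j<p. (x j)\<^sup>2) \<le> 1" "i < p"
  shows "\<bar>x i\<bar> \<le> 1"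
proof -
  have "(x i)\<^sup>2 \<le> (\<Sum>j<p. (x j)\<^sup>2)" using assms(2) by (intro member_le_sum) auto
  then show ?thesis using assms(1) abs_square_le_1 by (metis order_trans)
qed

lemma abs_cov_le_1:
  assumes "prob_space D" and bounded: "AE x in D. (\<Sum>j<p. (x j)\<^sup>2) \<le> 1" and "i < p" "j < p"
  shows "\<bar>cov D i j\<bar> \<le> 1"
proof -
  interpret prob_space D by fact
  have "AE x in D. \<bar>x i * x j\<bar> \<le> 1"
    using bounded by eventually_elim
      (use abs_le_1_of_sum_squares_le_1 assms(3,4) in \<open>auto simp: abs_mult intro!: mult_le_one\<close>)
  then have "AE x in D. x i * x j \<le> 1" "AE x in D. - (x i * x j) \<le> 1"
    by auto
  then show ?thesis
    unfolding cov_def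
    using integral_le_const[of "\<lambda>x. x i * x j" 1] integral_le_const[of "\<lambda>x. - (x i * x j)" 1]
    by (cases "integrable D (\<lambda>x. x i * x j)") (auto simp: not_integrable_integral_eq)
qed

lemma abs_sample_cov_le_1:
  assumes bounded: "\<And>k. k < n \<Longrightarrow> (\<Sum>j<p. (xs k j)\<^sup>2) \<le> 1" and "i < p" "j < p"
  shows "\<bar>sample_cov n xs i j\<bar> \<le> 1"
proof -
  have "\<bar>\<Sum>k<n. xs k i * xs k j\<bar> \<le> (\<Sum>k<n. \<bar>xs k i * xs k j\<bar>)" by (rule sum_abs)
  also have "\<dots> \<le> (\<Sum>k<n. 1)"
    using bounded abs_le_1_of_sum_squares_le_1 assms(2,3)
    by (intro sum_mono) (auto simp: abs_mult intro!: mult_le_one)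
  finally show ?thesis unfolding sample_cov_def
    by (cases "n = 0") (auto simp: abs_mult divide_le_eq)
qed

lemma measurable_sample_cov:
  assumes sets_D: "sets D = sets (PiM {..<p} (\<lambda>_. borel))" and "i < p" "j < p"
  shows "(\<lambda>xs. sample_cov n xs i j) \<in> borel_measurable (PiM {..<n} (\<lambda>_. D))"
proof -
  have coordinate: "(\<lambda>x. x l) \<in> borel_measurable D" if "l < p" for l
    using measurable_component_singleton[of l "{..<p}" "\<lambda>_. borel"] that
    by (subst measurable_cong_sets[OF sets_D refl]) auto
  have "(\<lambda>xs. xs k l) \<in> borel_measurable (PiM {..<n} (\<lambda>_. D))" if "k < n" "l < p" for k l
    using measurable_compose[OF measurable_component_singleton[of k "{..<n}" "\<lambda>_. D"] coordinate[of l]] that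
    by auto
  then show ?thesis unfolding sample_cov_def
    using assms by (intro borel_measurable_times borel_measurable_const borel_measurable_sum) auto
qed

lemma measurable_sym_noise:
  assumes "i < p" "j < p"
  shows "(\<lambda>z. sym_noise z i j) \<in> borel_measurable (noise_measure p \<sigma>)"
proof -
  have "(min i j, max i j) \<in> upper_idx p"
    using assms unfolding upper_idx_def by (auto simp: min_def max_def)
  from measurable_component_singleton[OF this, of "\<lambda>_. density lborel (normal_density 0 \<sigma>)"]
  show ?thesis unfolding noise_measure_def sym_noise_def
    by (subst measurable_cong_sets[OF refl, where N'="density lborel (normal_density 0 \<sigma>)"]) auto
qed

lemma nn_integral_sym_noise:
  assumes "\<sigma> > 0" "i < p" "j < p" and g: "g \<in> borel_measurable borel"
  shows "(\<integral>\<^sup>+z. g (sym_noise z i j) \<partial>noise_measure p \<sigma>)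
    = (\<integral>\<^sup>+x. g x \<partial>density lborel (normal_density 0 \<sigma>))"
proof -
  have "(min i j, max i j) \<in> upper_idx p"
    using assms unfolding upper_idx_def by (auto simp: min_def max_def)
  moreover have "g \<in> borel_measurable (density lborel (normal_density 0 \<sigma>))"
    using g by (subst measurable_cong_sets[OF sets_density refl]) simp
  ultimately show ?thesis unfolding noise_measure_def sym_noise_def
    using assms(1) by (intro nn_integral_PiM_component prob_space_normal_density)
qed

lemma sq_op_norm_dp_threshold_error_le:
  fixes D :: "(nat \<Rightarrow> real) measure" and a b \<sigma> :: real
  assumes p: "p > 0" and w: "w \<ge> 1" and ab: "a \<ge> 0" "b \<ge> 0"
    and D: "prob_space D" and bounded: "AE x in D. (\<Sum>j<p. (x j)\<^sup>2) \<le> 1" and G: "G0 p s (cov D)"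
    and xs: "\<forall>k\<in>{..<n}. (\<Sum>j<p. (xs k j)\<^sup>2) \<le> 1"
  shows "(op_norm p w (\<lambda>i j. dp_threshold n (a + b) xs z i j - cov D i j))\<^sup>2
    \<le> 8 * (a + b)\<^sup>2 * (real s + 1)\<^sup>2
      + (\<Sum>i<p. \<Sum>j<p. 4 * (real p)\<^sup>2 * (3 + (a + b))\<^sup>2 * of_bool (\<bar>sample_cov n xs i j - cov D i j\<bar> > a)
        + 2 * (real p)\<^sup>2 * (exp (- 3 * b\<^sup>2 / (8 * \<sigma>\<^sup>2))
          * ((36 + 4 * (sym_noise z i j)\<^sup>2) * exp (3 * (sym_noise z i j)\<^sup>2 / (8 * \<sigma>\<^sup>2)))))"
proof -
  have entries_bounded: "\<bar>cov D i j\<bar> \<le> 1 \<and> \<bar>sample_cov n xs i j\<bar> \<le> 1" if "i < p" "j < p" for i j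
    using abs_cov_le_1[OF D bounded that] abs_sample_cov_le_1[of n xs p i j] xs that by simp
  have "cov D i j = cov D j i" "sample_cov n xs i j = sample_cov n xs j i"
    "sym_noise z i j = sym_noise z j i" for i j
    by (simp_all add: cov_def sample_cov_def sym_noise_def mult.commute min.commute max.commute)
  from op_norm_threshold_error_sq_le[where S = "cov D" and S0 = "sample_cov n xs"
      and Z = "sym_noise z" and \<sigma> = \<sigma>, OF p w ab entries_bounded this G]
  show ?thesis by (simp add: dp_threshold_def Let_def)
qed

lemma nn_integral_sym_noise_exp_moment:
  fixes c \<sigma> :: real
  assumes "c \<ge> 0" "\<sigma> > 0" "i < p" "j < p"
  shows "(\<integral>\<^sup>+z. ennreal (c * ((36 + 4 * (sym_noise z i j)\<^sup>2) * exp (3 * (sym_noise z i j)\<^sup>2 / (8 * \<sigma>\<^sup>2))))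
      \<partial>noise_measure p \<sigma>) = ennreal (c * (2 * (36 + 16 * \<sigma>\<^sup>2)))"
proof -
  have "(\<integral>\<^sup>+z. ennreal (c * ((36 + 4 * (sym_noise z i j)\<^sup>2) * exp (3 * (sym_noise z i j)\<^sup>2 / (8 * \<sigma>\<^sup>2))))
      \<partial>noise_measure p \<sigma>)
    = (\<integral>\<^sup>+x. ennreal c * ennreal ((36 + 4 * x\<^sup>2) * exp (3 * x\<^sup>2 / (8 * \<sigma>\<^sup>2)))
      \<partial>density lborel (normal_density 0 \<sigma>))"
    using assms by (subst nn_integral_sym_noise) (auto simp: ennreal_mult)
  also have "\<dots> = ennreal c * ennreal (2 * (36 + 4 * 4 * \<sigma>\<^sup>2))"
    using assms by (subst nn_integral_cmult) (auto simp: nn_integral_normal_exp_moment)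
  also have "\<dots> = ennreal (c * (2 * (36 + 16 * \<sigma>\<^sup>2)))"
    using assms by (simp add: ennreal_mult)
  finally show ?thesis .
qed

lemma nn_integral_dp_threshold_risk_le:
  fixes D :: "(nat \<Rightarrow> real) measure" and a b \<sigma> q :: real
  assumes p: "p > 0" and w: "w \<ge> 1"
    and D: "prob_space D" and sets_D: "sets D = sets (PiM {..<p} (\<lambda>_. borel))"
    and bounded: "AE x in D. (\<Sum>j<p. (x j)\<^sup>2) \<le> 1" and G: "G0 p s (cov D)"
    and ab: "a \<ge> 0" "b \<ge> 0" and \<sigma>: "\<sigma> > 0"
    and tail: "\<And>i j. i < p \<Longrightarrow> j < p \<Longrightarrow> measure (PiM {..<n} (\<lambda>_. D))
      {xs \<in> space (PiM {..<n} (\<lambda>_. D)). \<bar>sample_cov n xs i j - cov D i j\<bar> > a} \<le> q"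
  shows "(\<integral>\<^sup>+\<omega>. ennreal ((op_norm p w (\<lambda>i j. dp_threshold n (a + b) (fst \<omega>) (snd \<omega>) i j - cov D i j))\<^sup>2)
      \<partial>(PiM {..<n} (\<lambda>_. D) \<Otimes>\<^sub>M noise_measure p \<sigma>))
    \<le> ennreal (8 * (a + b)\<^sup>2 * (real s + 1)\<^sup>2 + 4 * real p ^ 4 * (3 + (a + b))\<^sup>2 * q
      + 4 * real p ^ 4 * exp (- 3 * b\<^sup>2 / (8 * \<sigma>\<^sup>2)) * (36 + 16 * \<sigma>\<^sup>2))"
proof -
  define M1 where "M1 = PiM {..<n} (\<lambda>_. D)"
  define M2 where "M2 = noise_measure p \<sigma>"
  define B where "B i j = {xs \<in> space M1. \<bar>sample_cov n xs i j - cov D i j\<bar> > a}" for i j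
  define c0 where "c0 = 8 * (a + b)\<^sup>2 * (real s + 1)\<^sup>2"
  define c1 where "c1 = 4 * (real p)\<^sup>2 * (3 + (a + b))\<^sup>2"
  define c2 where "c2 = 2 * (real p)\<^sup>2 * exp (- 3 * b\<^sup>2 / (8 * \<sigma>\<^sup>2))"
  define h where "h x = (36 + 4 * x\<^sup>2) * exp (3 * x\<^sup>2 / (8 * \<sigma>\<^sup>2))" for x :: real
  have c: "c0 \<ge> 0" "c1 \<ge> 0" "c2 \<ge> 0" unfolding c0_def c1_def c2_def by simp_all
  have q: "q \<ge> 0" using tail[OF p p] measure_nonneg order_trans by blast
  have M1: "prob_space M1" unfolding M1_def using D by (intro prob_space_PiM)
  have M2: "prob_space M2" unfolding M2_def noise_measure_def
    using \<sigma> by (intro prob_space_PiM prob_space_normal_density)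
  have [measurable]: "h \<in> borel_measurable borel" unfolding h_def by measurable
  have B_sets: "B i j \<in> sets M1" if "i < p" "j < p" for i j
    using measurable_sample_cov[OF sets_D that, of n] unfolding B_def M1_def by measurable
  have "AE \<omega> in M1 \<Otimes>\<^sub>M M2. \<forall>k\<in>{..<n}. (\<Sum>j<p. (fst \<omega> k j)\<^sup>2) \<le> 1"
    unfolding M1_def by (intro AE_pair_fst M2 AE_PiM_all_components[OF D bounded])
  then have pointwise: "AE \<omega> in M1 \<Otimes>\<^sub>M M2.
      ennreal ((op_norm p w (\<lambda>i j. dp_threshold n (a + b) (fst \<omega>) (snd \<omega>) i j - cov D i j))\<^sup>2)
      \<le> ennreal c0 + (\<Sum>i<p. \<Sum>j<p. ennreal (c1 * indicator (B i j) (fst \<omega>))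
        + ennreal (c2 * h (sym_noise (snd \<omega>) i j)))"
  proof (rule AE_mp, intro AE_I2 impI)
    fix \<omega> assume "\<omega> \<in> space (M1 \<Otimes>\<^sub>M M2)" and xs: "\<forall>k\<in>{..<n}. (\<Sum>j<p. (fst \<omega> k j)\<^sup>2) \<le> 1"
    then have "fst \<omega> \<in> space M1" by (auto simp: space_pair_measure)
    with sq_op_norm_dp_threshold_error_le[OF p w ab D bounded G xs, of "snd \<omega>" \<sigma>] c
    show "ennreal ((op_norm p w (\<lambda>i j. dp_threshold n (a + b) (fst \<omega>) (snd \<omega>) i j - cov D i j))\<^sup>2)
      \<le> ennreal c0 + (\<Sum>i<p. \<Sum>j<p. ennreal (c1 * indicator (B i j) (fst \<omega>))
        + ennreal (c2 * h (sym_noise (snd \<omega>) i j)))"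
      by (simp add: B_def indicator_def c0_def c1_def c2_def h_def mult.assoc ennreal_plus[symmetric]
          sum_nonneg ennreal_leI del: ennreal_plus)
  qed
  have Eg: "(\<integral>\<^sup>+xs. ennreal (c1 * indicator (B i j) xs) \<partial>M1) \<le> ennreal (c1 * q)"
    if "i < p" "j < p" for i j
    using tail[OF that] by (intro nn_integral_cmult_indicator_le M1 B_sets[OF that] c) (simp add: B_def M1_def)
  have "(\<integral>\<^sup>+\<omega>. ennreal ((op_norm p w (\<lambda>i j. dp_threshold n (a + b) (fst \<omega>) (snd \<omega>) i j - cov D i j))\<^sup>2)
      \<partial>(M1 \<Otimes>\<^sub>M M2))
    \<le> ennreal c0 + of_nat p * (of_nat p * (ennreal (c1 * q) + ennreal (c2 * (2 * (36 + 16 * \<sigma>\<^sup>2)))))"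
    using B_sets measurable_sym_noise[of _ p _ \<sigma>] nn_integral_sym_noise_exp_moment[OF c(3) \<sigma>]
    by (intro nn_integral_pair_le_double_sum[OF M1 M2 pointwise] Eg) (auto simp: M2_def h_def)
  also have "\<dots> = ennreal (c0 + real p * (real p * (c1 * q + c2 * (2 * (36 + 16 * \<sigma>\<^sup>2)))))"
    using c q by (simp add: ennreal_mult ennreal_of_nat_eq_real_of_nat)
  also have "c0 + real p * (real p * (c1 * q + c2 * (2 * (36 + 16 * \<sigma>\<^sup>2))))
    = 8 * (a + b)\<^sup>2 * (real s + 1)\<^sup>2 + 4 * real p ^ 4 * (3 + (a + b))\<^sup>2 * q
      + 4 * real p ^ 4 * exp (- 3 * b\<^sup>2 / (8 * \<sigma>\<^sup>2)) * (36 + 16 * \<sigma>\<^sup>2)"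
    by (simp add: c0_def c1_def c2_def algebra_simps power2_eq_square power4_eq_xxxx)
  finally show ?thesis unfolding M1_def M2_def .
qed

lemma exp_neg_nat_mult_ln:
  fixes x :: real
  assumes "x > 0"
  shows "exp (- (real k * ln x)) = 1 / x ^ k"
  using assms by (simp add: exp_minus exp_of_nat_mult inverse_eq_divide)

lemma ln_ge_half:
  fixes x :: real
  assumes "x \<ge> 2"
  shows "ln x \<ge> 1 / 2"
proof -
  have "ln (1 / x) \<le> 1 / x - 1" using assms by (intro ln_le_minus_one) auto
  moreover have "ln (1 / x) = - ln x" using assms by (simp add: ln_div)
  moreover have "1 / x \<le> 1 / 2" using assms by simp
  ultimately show ?thesis by linarith
qed

lemma ln_five_quarters_div_ge:
  fixes \<delta> :: real
  assumes "0 < \<delta>" "\<delta> \<le> 1"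
  shows "ln (1.25 / \<delta>) \<ge> 1 / 5"
proof -
  have "ln (\<delta> / 1.25) \<le> \<delta> / 1.25 - 1" using assms by (intro ln_le_minus_one) auto
  moreover have "ln (\<delta> / 1.25) = - ln (1.25 / \<delta>)" using assms by (simp add: ln_div)
  moreover have "\<delta> / 1.25 \<le> 4 / 5" using assms by simp
  ultimately show ?thesis by linarith
qed

text \<open>Every error term is a multiple of T; the crude bound 1 / p \<le> 1 / n \<le> 10 T absorbs
  the terms that decay in p.\<close>

lemma dp_risk_scales_le:
  fixes \<gamma> \<epsilon> lp L a b \<sigma> :: real and n p :: nat
  assumes \<gamma>: "\<gamma> > 0" and \<epsilon>: "0 < \<epsilon>" "\<epsilon> \<le> 1"
    and lp: "lp \<ge> 1 / 2" and L: "L \<ge> 1 / 5" and n: "1 \<le> n" "n \<le> p"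
    and a: "a\<^sup>2 = \<gamma>\<^sup>2 * lp / real n" and b: "b\<^sup>2 = 16 * \<sigma>\<^sup>2 * lp"
    and \<sigma>: "\<sigma>\<^sup>2 = 2 * L / (real n ^ 2 * \<epsilon>\<^sup>2)"
  defines "T \<equiv> lp * L / (real n * \<epsilon>\<^sup>2)"
  shows "1 / real p \<le> 10 * T" and "(a + b)\<^sup>2 \<le> (10 * \<gamma>\<^sup>2 + 64) * T" and "\<sigma>\<^sup>2 \<le> 4 * T"
proof -
  have nr: "real n \<ge> 1" "real p \<ge> real n" using n by auto
  have \<epsilon>2: "0 < \<epsilon>\<^sup>2" "\<epsilon>\<^sup>2 \<le> 1" using \<epsilon> by (auto simp: power_le_one)
  have "1 / 10 \<le> lp * L" using mult_mono[of "1 / 2" lp "1 / 5" L] lp L by simp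
  then have "1 / real n \<le> 10 * (lp * L) / real n" using nr by (intro divide_right_mono) auto
  also have "\<dots> \<le> 10 * T" unfolding T_def using lp L nr \<epsilon>2 by (simp add: field_simps mult_left_le)
  finally show "1 / real p \<le> 10 * T" using nr by (smt (verit) frac_le)
  have \<sigma>_le: "\<sigma>\<^sup>2 \<le> 2 * L / (real n * \<epsilon>\<^sup>2)"
    unfolding \<sigma> using L nr \<epsilon>2 by (intro divide_left_mono mult_right_mono) (auto simp: power2_eq_square)
  also have "\<dots> \<le> 4 * T" unfolding T_def using lp L nr \<epsilon>2 by (simp add: field_simps)
  finally show "\<sigma>\<^sup>2 \<le> 4 * T" .
  have "b\<^sup>2 \<le> 16 * lp * (2 * L / (real n * \<epsilon>\<^sup>2))"
    using b mult_left_mono[OF \<sigma>_le, of "16 * lp"] lp by (simp add: mult_ac)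
  then have "b\<^sup>2 \<le> 32 * T" unfolding T_def by (simp add: field_simps)
  moreover have "a\<^sup>2 \<le> 5 * \<gamma>\<^sup>2 * T"
    unfolding a T_def using lp L nr \<epsilon>2 \<gamma> by (simp add: field_simps mult_left_le)
  ultimately show "(a + b)\<^sup>2 \<le> (10 * \<gamma>\<^sup>2 + 64) * T"
    using zero_le_square[of "a - b"] by (simp add: power2_eq_square algebra_simps)
qed

lemma dp_risk_remainder_le:
  fixes C1 T \<tau> \<sigma> K :: real and p :: nat
  assumes C1: "C1 > 0" and p: "p \<ge> 1" and p_T: "1 / real p \<le> 10 * T"
    and \<tau>: "\<tau>\<^sup>2 \<le> K * T" and \<sigma>: "\<sigma>\<^sup>2 \<le> 4 * T"
  shows "4 * real p ^ 4 * (3 + \<tau>)\<^sup>2 * (C1 / real p ^ 8) + 4 * real p ^ 4 * (1 / real p ^ 6) * (36 + 16 * \<sigma>\<^sup>2)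
    \<le> (720 * C1 + 8 * C1 * K + 1696) * T"
proof -
  have "0 < 1 / real p" using p by simp
  then have T: "T > 0" using p_T by linarith
  have p_powers: "1 / real p ^ 4 \<le> 1 / real p" "1 / real p ^ 2 \<le> 1 / real p"
    "1 / real p ^ 4 \<le> 1" "1 / real p ^ 2 \<le> 1"
  proof -
    have "real p \<le> real p ^ 4" "real p \<le> real p ^ 2"
      using power_increasing[of 1 4 "real p"] power_increasing[of 1 2 "real p"] p by auto
    then show "1 / real p ^ 4 \<le> 1 / real p" "1 / real p ^ 2 \<le> 1 / real p"
      "1 / real p ^ 4 \<le> 1" "1 / real p ^ 2 \<le> 1"
      using p by (auto intro!: divide_left_mono simp: divide_le_eq)
  qed
  have "(3 + \<tau>)\<^sup>2 \<le> 18 + 2 * \<tau>\<^sup>2"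
    using zero_le_square[of "3 - \<tau>"] by (simp add: power2_eq_square algebra_simps)
  have "4 * real p ^ 4 * (3 + \<tau>)\<^sup>2 * (C1 / real p ^ 8) = 4 * C1 * (3 + \<tau>)\<^sup>2 * (1 / real p ^ 4)"
    using p by (simp add: field_simps eval_nat_numeral)
  also have "\<dots> \<le> 4 * C1 * (18 + 2 * \<tau>\<^sup>2) * (1 / real p ^ 4)"
    using C1 \<open>(3 + \<tau>)\<^sup>2 \<le> _\<close> by (intro mult_right_mono mult_left_mono) auto
  also have "\<dots> = 72 * C1 * (1 / real p ^ 4) + 8 * C1 * \<tau>\<^sup>2 * (1 / real p ^ 4)"
    by (simp add: algebra_simps)
  also have "\<dots> \<le> 72 * C1 * (10 * T) + 8 * C1 * (K * T) * 1"
    using C1 p_T \<tau> p_powers order_trans[OF zero_le_power2 \<tau>] by (intro add_mono mult_mono mult_left_mono) auto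
  finally have sample_term: "4 * real p ^ 4 * (3 + \<tau>)\<^sup>2 * (C1 / real p ^ 8) \<le> (720 * C1 + 8 * C1 * K) * T"
    by (simp add: algebra_simps)
  have "4 * real p ^ 4 * (1 / real p ^ 6) * (36 + 16 * \<sigma>\<^sup>2) = 144 * (1 / real p ^ 2) + 64 * \<sigma>\<^sup>2 * (1 / real p ^ 2)"
    using p by (simp add: field_simps eval_nat_numeral)
  also have "\<dots> \<le> 144 * (10 * T) + 64 * (4 * T) * 1"
    using p_powers p_T \<sigma> T by (intro add_mono mult_mono) auto
  finally show ?thesis using sample_term by (simp add: algebra_simps)
qed

lemma dp_risk_terms_le:
  fixes \<gamma> C1 \<epsilon> lp L a b \<sigma> :: real and n p s :: nat
  assumes \<gamma>: "\<gamma> > 0" and C1: "C1 > 0" and \<epsilon>: "0 < \<epsilon>" "\<epsilon> \<le> 1"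
    and lp: "lp \<ge> 1 / 2" and L: "L \<ge> 1 / 5" and n: "1 \<le> n" "n \<le> p" and s: "1 \<le> s"
    and a: "a\<^sup>2 = \<gamma>\<^sup>2 * lp / real n" and b: "b\<^sup>2 = 16 * \<sigma>\<^sup>2 * lp"
    and \<sigma>: "\<sigma>\<^sup>2 = 2 * L / (real n ^ 2 * \<epsilon>\<^sup>2)"
  shows "8 * (a + b)\<^sup>2 * (real s + 1)\<^sup>2 + 4 * real p ^ 4 * (3 + (a + b))\<^sup>2 * (C1 / real p ^ 8)
      + 4 * real p ^ 4 * (1 / real p ^ 6) * (36 + 16 * \<sigma>\<^sup>2)
    \<le> ((10 * \<gamma>\<^sup>2 + 64) * (32 + 8 * C1) + 720 * C1 + 1696) * (real s)\<^sup>2 * (lp * L / (real n * \<epsilon>\<^sup>2))"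
proof -
  define T where "T = lp * L / (real n * \<epsilon>\<^sup>2)"
  define K where "K = 10 * \<gamma>\<^sup>2 + 64"
  note scales = dp_risk_scales_le[OF \<gamma> \<epsilon> lp L n a b \<sigma>, folded T_def K_def]
  have T: "T > 0" unfolding T_def using lp L n \<epsilon> by simp
  have K: "K \<ge> 0" unfolding K_def by simp
  have "(real s + 1)\<^sup>2 \<le> 4 * (real s)\<^sup>2"
    using s power_mono[of "real s + 1" "2 * real s" 2] by (simp add: power_mult_distrib)
  from mult_mono[OF scales(2) this] T K
  have support_term: "8 * (a + b)\<^sup>2 * (real s + 1)\<^sup>2 \<le> 32 * K * (real s)\<^sup>2 * T"
    by (simp add: algebra_simps)
  have "(720 * C1 + 8 * C1 * K + 1696) * T \<le> (720 * C1 + 8 * C1 * K + 1696) * (real s)\<^sup>2 * T"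
  proof -
    have "1 \<le> (real s)\<^sup>2" using s by simp
    moreover have "0 \<le> (720 * C1 + 8 * C1 * K + 1696) * T" using C1 T K by simp
    ultimately show ?thesis using mult_left_mono by (fastforce simp: mult_ac)
  qed
  with support_term dp_risk_remainder_le[OF C1 _ scales(1,2,3)] n
  have "8 * (a + b)\<^sup>2 * (real s + 1)\<^sup>2 + 4 * real p ^ 4 * (3 + (a + b))\<^sup>2 * (C1 / real p ^ 8)
      + 4 * real p ^ 4 * (1 / real p ^ 6) * (36 + 16 * \<sigma>\<^sup>2)
    \<le> 32 * K * (real s)\<^sup>2 * T + (720 * C1 + 8 * C1 * K + 1696) * (real s)\<^sup>2 * T"
    by linarith
  also have "\<dots> = (K * (32 + 8 * C1) + 720 * C1 + 1696) * (real s)\<^sup>2 * T"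
    by (simp add: algebra_simps)
  finally show ?thesis unfolding T_def K_def .
qed

lemma nn_integral_dp_threshold_risk_bound:
  fixes \<gamma> C1 t0 \<epsilon> \<delta> :: real and p n s :: nat and D :: "(nat \<Rightarrow> real) measure" and w :: ereal
  assumes \<gamma>: "\<gamma> > 0" and C1: "C1 > 0" and p: "2 \<le> p" and n: "1 \<le> n" "n \<le> p" and s: "1 \<le> s"
    and \<epsilon>: "0 < \<epsilon>" "\<epsilon> \<le> 1" and \<delta>: "0 < \<delta>" "\<delta> \<le> 1" and w: "1 \<le> w"
    and D: "prob_space D" and sets_D: "sets D = sets (PiM {..<p} (\<lambda>_. borel))"
    and bounded: "AE x in D. (\<Sum>j<p. (x j)\<^sup>2) \<le> 1" and G: "G0 p s (cov D)"
    and concentration: "\<forall>i<p. \<forall>j<p. \<forall>t. 0 < t \<longrightarrow> t \<le> t0 \<longrightarrow>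
        measure (PiM {..<n} (\<lambda>_. D))
          {xs \<in> space (PiM {..<n} (\<lambda>_. D)). \<bar>sample_cov n xs i j - cov D i j\<bar> > t}
        \<le> C1 * exp (- 8 * real n * t\<^sup>2 / \<gamma>\<^sup>2)"
    and t0: "\<gamma> * sqrt (ln (real p) / real n) \<le> t0"
  shows "(\<integral>\<^sup>+ \<omega>. ennreal ((op_norm p w
          (\<lambda>i j. dp_threshold n (dp_tau \<gamma> p n \<epsilon> \<delta>) (fst \<omega>) (snd \<omega>) i j - cov D i j))\<^sup>2)
       \<partial>(PiM {..<n} (\<lambda>_. D) \<Otimes>\<^sub>M noise_measure p (dp_sigma1 n \<epsilon> \<delta>)))
    \<le> ennreal (((10 * \<gamma>\<^sup>2 + 64) * (32 + 8 * C1) + 720 * C1 + 1696)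
      * (real s)\<^sup>2 * ln (real p) * ln (1.25 / \<delta>) / (real n * \<epsilon>\<^sup>2))"
proof -
  define lp L where "lp = ln (real p)" and "L = ln (1.25 / \<delta>)"
  define \<sigma> where "\<sigma> = dp_sigma1 n \<epsilon> \<delta>"
  define a b where "a = \<gamma> * sqrt (lp / real n)" and "b = 4 * \<sigma> * sqrt lp"
  have lp: "lp \<ge> 1 / 2" unfolding lp_def using p by (intro ln_ge_half) auto
  have L: "L \<ge> 1 / 5" unfolding L_def using \<delta> by (rule ln_five_quarters_div_ge)
  have \<sigma>_pos: "\<sigma> > 0" using L n \<epsilon> by (simp add: \<sigma>_def dp_sigma1_def L_def)
  have \<sigma>_sq: "\<sigma>\<^sup>2 = 2 * L / (real n ^ 2 * \<epsilon>\<^sup>2)"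
    using L by (simp add: \<sigma>_def dp_sigma1_def L_def power_divide power_mult_distrib)
  have a_sq: "a\<^sup>2 = \<gamma>\<^sup>2 * lp / real n" unfolding a_def using lp by (simp add: power_mult_distrib)
  have b_sq: "b\<^sup>2 = 16 * \<sigma>\<^sup>2 * lp" unfolding b_def using lp by (simp add: power_mult_distrib)
  have a: "a > 0" unfolding a_def using lp n \<gamma> by simp
  have b: "b \<ge> 0" unfolding b_def using \<sigma>_pos lp by simp
  have \<tau>: "dp_tau \<gamma> p n \<epsilon> \<delta> = a + b"
    by (simp add: dp_tau_def dp_sigma1_def a_def b_def \<sigma>_def lp_def L_def)
  have noise_tail: "exp (- 3 * b\<^sup>2 / (8 * \<sigma>\<^sup>2)) = 1 / real p ^ 6"
    using exp_neg_nat_mult_ln[of "real p" 6] p \<sigma>_pos by (simp add: b_sq lp_def field_simps)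
  have sample_tail: "measure (PiM {..<n} (\<lambda>_. D))
      {xs \<in> space (PiM {..<n} (\<lambda>_. D)). \<bar>sample_cov n xs i j - cov D i j\<bar> > a} \<le> C1 / real p ^ 8"
    if "i < p" "j < p" for i j
  proof -
    have "a \<le> t0" using t0 by (simp add: a_def lp_def)
    moreover have "exp (- 8 * real n * a\<^sup>2 / \<gamma>\<^sup>2) = 1 / real p ^ 8"
      using exp_neg_nat_mult_ln[of "real p" 8] p n \<gamma> by (simp add: a_sq lp_def field_simps)
    ultimately show ?thesis
      using concentration[rule_format, OF that a] by simp
  qed
  have "(\<integral>\<^sup>+ \<omega>. ennreal ((op_norm p w
          (\<lambda>i j. dp_threshold n (a + b) (fst \<omega>) (snd \<omega>) i j - cov D i j))\<^sup>2)
       \<partial>(PiM {..<n} (\<lambda>_. D) \<Otimes>\<^sub>M noise_measure p \<sigma>))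
    \<le> ennreal (8 * (a + b)\<^sup>2 * (real s + 1)\<^sup>2 + 4 * real p ^ 4 * (3 + (a + b))\<^sup>2 * (C1 / real p ^ 8)
      + 4 * real p ^ 4 * (1 / real p ^ 6) * (36 + 16 * \<sigma>\<^sup>2))"
    using nn_integral_dp_threshold_risk_le[OF _ w D sets_D bounded G _ b \<sigma>_pos sample_tail, unfolded noise_tail] p a
    by simp
  also have "\<dots> \<le> ennreal (((10 * \<gamma>\<^sup>2 + 64) * (32 + 8 * C1) + 720 * C1 + 1696)
      * (real s)\<^sup>2 * (lp * L / (real n * \<epsilon>\<^sup>2)))"
    by (intro ennreal_leI dp_risk_terms_le[OF \<gamma> C1 \<epsilon> lp L n s a_sq b_sq \<sigma>_sq])
  finally show ?thesis by (simp add: \<tau> \<sigma>_def lp_def L_def mult.assoc)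
qed

theorem corollary1:
  fixes \<sigma>sq \<gamma> C1 t0 :: real
  assumes "\<sigma>sq > 0" "\<gamma> > 0" "C1 > 0" "t0 > 0"
  shows "\<exists>C>0. \<forall>(p::nat) (n::nat) (s::nat) (\<epsilon>::real) (\<delta>::real) (D :: (nat \<Rightarrow> real) measure) (w::ereal).
    2 \<le> p \<longrightarrow> 1 \<le> n \<longrightarrow> n \<le> p \<longrightarrow> 1 \<le> s \<longrightarrow>
    0 < \<epsilon> \<longrightarrow> \<epsilon> \<le> 1 \<longrightarrow> 0 < \<delta> \<longrightarrow> \<delta> \<le> 1 \<longrightarrow> 1 \<le> w \<longrightarrow>
    prob_space D \<longrightarrow> sets D = sets (PiM {..<p} (\<lambda>_. borel)) \<longrightarrow>
    (\<forall>j<p. integrable D (\<lambda>x. x j) \<and> (\<integral>x. x j \<partial>D) = 0) \<longrightarrow>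
    (AE x in D. (\<Sum>j<p. (x j)\<^sup>2) \<le> 1) \<longrightarrow>
    (\<forall>v t. (\<Sum>j<p. (v j)\<^sup>2) = 1 \<longrightarrow> t > 0 \<longrightarrow>
        measure D {x \<in> space D. \<bar>\<Sum>j<p. v j * x j\<bar> > t} \<le> exp (- t\<^sup>2 / (2 * \<sigma>sq))) \<longrightarrow>
    G0 p s (cov D) \<longrightarrow>
    (\<forall>i<p. \<forall>j<p. \<forall>t. 0 < t \<longrightarrow> t \<le> t0 \<longrightarrow>
        measure (PiM {..<n} (\<lambda>_. D))
          {xs \<in> space (PiM {..<n} (\<lambda>_. D)). \<bar>sample_cov n xs i j - cov D i j\<bar> > t}
        \<le> C1 * exp (- 8 * real n * t\<^sup>2 / \<gamma>\<^sup>2)) \<longrightarrow>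
    \<gamma> * sqrt (ln (real p) / real n) \<le> t0 \<longrightarrow>
    (\<integral>\<^sup>+ \<omega>. ennreal ((op_norm p w
          (\<lambda>i j. dp_threshold n (dp_tau \<gamma> p n \<epsilon> \<delta>) (fst \<omega>) (snd \<omega>) i j - cov D i j))\<^sup>2)
       \<partial>(PiM {..<n} (\<lambda>_. D) \<Otimes>\<^sub>M noise_measure p (dp_sigma1 n \<epsilon> \<delta>)))
    \<le> ennreal (C * (real s)\<^sup>2 * ln (real p) * ln (1.25 / \<delta>) / (real n * \<epsilon>\<^sup>2))"
proof -
  have "(10 * \<gamma>\<^sup>2 + 64) * (32 + 8 * C1) + 720 * C1 + 1696 > 0"
    using assms by (intro add_pos_pos mult_pos_pos) auto
  with nn_integral_dp_threshold_risk_bound[OF assms(2,3)] show ?thesis by blast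
qed

end
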